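(* For the $N$-relay 1-2-1 diamond network (context) with relays operating all in FD or all in HD, $\mathsf{C}_{\rm cs,iid}$ (computed with the state set of that mode) equals the optimal value of the linear program $$\mathrm{P1^d}:\ \max\sum_{p=1}^N x_p\mathsf C_p\ \text{ s.t. }\ 0\le x_p\le1\ \forall p\in[1:N];\quad \sum_{p=1}^N x_p\frac{\mathsf C_p}{\ell_{p,0}}\le1;\quad \sum_{p=1}^N x_p\frac{\mathsf C_p}{\ell_{N+1,p}}\le1,$$ where $\mathsf C_p=\min\{\ell_{p,0},\ell_{N+1,p}\}$ in the FD case and $\mathsf C_p=\frac{\ell_{p,0}\ell_{N+1,p}}{\ell_{p,0}+\ell_{N+1,p}}$ in the HD case.
   Context: Diamond network: nodes $[0:N+1]$, source $0$, destination $N+1$, relays $[1:N]$; the only links are $(0,p)$ and $(p,N+1)$ for $p\in[1:N]$, with positive rational capacities $\ell_{p,0}$ and $\ell_{N+1,p}$; all other $\ell_{j,i}=0$. Network states: a state $s$ consists of sets $s_{i,t}\subseteq[1:N+1]\setminus\{i\}$ and $s_{i,r}\subseteq[0:N]\setminus\{i\}$, each of cardinality at most $1$, for $i\in[0:N+1]$, with $s_{0,r}=s_{N+1,t}=\emptyset$; in FD mode there is no further constraint; in HD mode additionally $|s_{i,t}|+|s_{i,r}|\le1$ for $i\in[1:N]$. $\mathcal S$ is the set of all states of the mode. Link $(i,j)$ is active in $s$ if $j\in s_{i,t}$ and $i\in s_{j,r}$. $\mathsf{C}_{\rm cs,iid}=\max_{\lambda}\min_{\Omega}\sum_{i\in\Omega,\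 j\in\Omega^c}\big(\sum_{s\in\mathcal S:\ (i,j)\text{ active in }s}\lambda_s\big)\ell_{j,i}$, maximum over probability vectors $(\lambda_s)_{s\in\mathcal S}$, minimum over $\Omega$ with $0\in\Omega\subseteq[0:N]$, $\Omega^c=[0:N+1]\setminus\Omega$. *)

theory Defs
  imports "HOL-Analysis.Analysis"
begin

datatype mode = FD | HD

text \<open>Diamond network with nodes 0..N+1. lsrc p = capacity of link (0,p), i.e. l_{p,0};
  ldst p = capacity of link (p,N+1), i.e. l_{N+1,p}. General l_{j,i} (receiver j, transmitter i):\<close>
definition ell :: "nat \<Rightarrow> (nat \<Rightarrow> real) \<Rightarrow> (nat \<Rightarrow> real) \<Rightarrow> nat \<Rightarrow> nat \<Rightarrow> real" where
  "ell N lsrc ldst j i =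
     (if i = 0 \<and> j \<in> {1..N} then lsrc j
      else if j = N + 1 \<and> i \<in> {1..N} then ldst i else 0)"

type_synonym state = "(nat \<Rightarrow> nat set) \<times> (nat \<Rightarrow> nat set)"
  \<comment> \<open>(s_t, s_r): s_t i = s_{i,t}, s_r i = s_{i,r}; empty outside the node range\<close>

definition states :: "nat \<Rightarrow> mode \<Rightarrow> state set" where
  "states N m = {(st, sr).
     (\<forall>i. i \<notin> {0..N+1} \<longrightarrow> st i = {} \<and> sr i = {}) \<and>
     (\<forall>i\<in>{0..N+1}. st i \<subseteq> {1..N+1} - {i} \<and> card (st i) \<le> 1 \<and>
                    sr i \<subseteq> {0..N} - {i} \<and> card (sr i) \<le> 1) \<and>
     sr 0 = {} \<and> st (N+1) = {} \<and>
     (m = HD \<longrightarrow> (\<forall>i\<in>{1..N}. card (st i) + card (sr i) \<le> 1))}"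

definition active :: "state \<Rightarrow> nat \<Rightarrow> nat \<Rightarrow> bool" where
  "active s i j \<longleftrightarrow> j \<in> fst s i \<and> i \<in> snd s j"

definition cut_value :: "nat \<Rightarrow> mode \<Rightarrow> (nat \<Rightarrow> real) \<Rightarrow> (nat \<Rightarrow> real) \<Rightarrow> (state \<Rightarrow> real)
    \<Rightarrow> nat set \<Rightarrow> real" where
  "cut_value N m lsrc ldst lam \<Omega> =
     (\<Sum>i\<in>\<Omega>. \<Sum>j\<in>{0..N+1} - \<Omega>.
        (\<Sum>s\<in>{s\<in>states N m. active s i j}. lam s) * ell N lsrc ldst j i)"

definition prob_vec :: "nat \<Rightarrow> mode \<Rightarrow> (state \<Rightarrow> real) \<Rightarrow> bool" where
  "prob_vec N m lam \<longleftrightarrow> (\<forall>s\<in>states N m. lam s \<ge> 0) \<and> (\<Sum>s\<in>states N m. lam s) = 1"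

definition C_cs_iid :: "nat \<Rightarrow> mode \<Rightarrow> (nat \<Rightarrow> real) \<Rightarrow> (nat \<Rightarrow> real) \<Rightarrow> real" where
  "C_cs_iid N m lsrc ldst =
     Sup ((\<lambda>lam. Min ((\<lambda>\<Omega>. cut_value N m lsrc ldst lam \<Omega>) ` {\<Omega>. 0 \<in> \<Omega> \<and> \<Omega> \<subseteq> {0..N}}))
          ` {lam. prob_vec N m lam})"

definition Cp :: "mode \<Rightarrow> (nat \<Rightarrow> real) \<Rightarrow> (nat \<Rightarrow> real) \<Rightarrow> nat \<Rightarrow> real" where
  "Cp m lsrc ldst p =
     (if m = FD then min (lsrc p) (ldst p)
      else lsrc p * ldst p / (lsrc p + ldst p))"

definition P1d_feasible :: "nat \<Rightarrow> mode \<Rightarrow> (nat \<Rightarrow> real) \<Rightarrow> (nat \<Rightarrow> real) \<Rightarrow> (nat \<Rightarrow> real) \<Rightarrow> bool" where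
  "P1d_feasible N m lsrc ldst x \<longleftrightarrow>
     (\<forall>p\<in>{1..N}. 0 \<le> x p \<and> x p \<le> 1) \<and>
     (\<Sum>p=1..N. x p * Cp m lsrc ldst p / lsrc p) \<le> 1 \<and>
     (\<Sum>p=1..N. x p * Cp m lsrc ldst p / ldst p) \<le> 1"

definition P1d_opt :: "nat \<Rightarrow> mode \<Rightarrow> (nat \<Rightarrow> real) \<Rightarrow> (nat \<Rightarrow> real) \<Rightarrow> real" where
  "P1d_opt N m lsrc ldst =
     Sup ((\<lambda>x. \<Sum>p=1..N. x p * Cp m lsrc ldst p) ` {x. P1d_feasible N m lsrc ldst x})"

end

theory Submission
  imports Defs
begin

text \<open>Only the links source\<rightarrow>relay and relay\<rightarrow>destination have positive capacity, so every cut
  value of a schedule is a sum over the relays \<open>p\<close> of either \<open>A p * lsrc p\<close> or \<open>B p * ldst p\<close>,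
  where \<open>A p\<close> and \<open>B p\<close> are the probabilities that the two links of relay \<open>p\<close> are active;
  the minimum cut is therefore \<open>\<Sum>p. min (A p * lsrc p) (B p * ldst p)\<close>.
  The activation probabilities of a schedule satisfy \<open>\<Sum>p. A p \<le> 1\<close> and \<open>\<Sum>p. B p \<le> 1\<close>
  (source and destination talk to at most one relay) and, in HD, \<open>A p + B p \<le> 1\<close>.
  Conversely every such pair is realised by a schedule: lay out \<open>A\<close> and \<open>B\<close>, padded with their
  slack, as two partitions of the unit circle and couple them by a rotation, chosen in HD so that no
  relay transmits and receives at the same time. The substitution
  \<open>x p * Cp p = min (A p * lsrc p) (B p * ldst p)\<close> turns these constraints into those of \<open>P1\<^sup>d\<close>.\<close>

section \<open>Interval overlaps\<close>

definition overlap :: "real \<Rightarrow> real \<Rightarrow> real \<Rightarrow> real \<Rightarrow> real" where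
  "overlap u1 u2 v1 v2 = max 0 (min u2 v2 - max u1 v1)"

lemma overlap_nonneg: "0 \<le> overlap u1 u2 v1 v2"
  by (simp add: overlap_def)

lemma overlap_commute: "overlap u1 u2 v1 v2 = overlap v1 v2 u1 u2"
  by (simp add: overlap_def min.commute max.commute)

lemma overlap_add:
  "v1 \<le> v2 \<Longrightarrow> v2 \<le> v3 \<Longrightarrow> overlap u1 u2 v1 v2 + overlap u1 u2 v2 v3 = overlap u1 u2 v1 v3"
  by (simp add: overlap_def max_def min_def)

lemma overlap_subinterval:
  "v1 \<le> u1 \<Longrightarrow> u1 \<le> u2 \<Longrightarrow> u2 \<le> v2 \<Longrightarrow> overlap u1 u2 v1 v2 = u2 - u1"
  by (simp add: overlap_def max_def min_def)

lemma sum_overlap_telescope: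
  assumes "\<And>k. k < n \<Longrightarrow> c k \<le> c (Suc k)"
  shows "(\<Sum>k=1..n. overlap u1 u2 (c (k - 1)) (c k)) = overlap u1 u2 (c 0) (c n)"
  using assms
proof (induction n)
  case 0
  then show ?case by (simp add: overlap_def)
next
  case (Suc n)
  have "c 0 \<le> c n"
    using Suc.prems by (induction n) (auto intro: order_trans)
  with Suc show ?case
    by (simp add: sum.cl_ivl_Suc overlap_add)
qed

section \<open>Couplings of subprobability vectors\<close>

definition cumsum :: "(nat \<Rightarrow> real) \<Rightarrow> nat \<Rightarrow> real" where
  "cumsum a k = sum a {1..k}"

lemma cumsum_0 [simp]: "cumsum a 0 = 0"
  by (simp add: cumsum_def)

lemma cumsum_Suc: "cumsum a (Suc k) = cumsum a k + a (Suc k)"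
  by (simp add: cumsum_def sum.cl_ivl_Suc)

lemma cumsum_mono:
  "\<forall>i\<in>{1..N}. 0 \<le> a i \<Longrightarrow> j \<le> k \<Longrightarrow> k \<le> N \<Longrightarrow> cumsum a j \<le> cumsum a k"
  unfolding cumsum_def by (intro sum_mono2) auto

lemma cumsum_nonneg: "\<forall>i\<in>{1..N}. 0 \<le> a i \<Longrightarrow> k \<le> N \<Longrightarrow> 0 \<le> cumsum a k"
  using cumsum_mono[of N a 0 k] by simp

text \<open>The weights \<open>a 1, \<dots>, a N\<close> (total at most 1) and the slack \<open>1 - cumsum a N\<close>, assigned
  to index 0, cut \<open>[0, 1]\<close> into consecutive segments \<open>[seg_lo a N p, seg_hi a N p]\<close>.\<close>

definition seg_lo :: "(nat \<Rightarrow> real) \<Rightarrow> nat \<Rightarrow> nat \<Rightarrow> real" where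
  "seg_lo a N p = (if p = 0 then cumsum a N else cumsum a (p - 1))"

definition seg_hi :: "(nat \<Rightarrow> real) \<Rightarrow> nat \<Rightarrow> nat \<Rightarrow> real" where
  "seg_hi a N p = (if p = 0 then 1 else cumsum a p)"

lemma seg_length: "1 \<le> p \<Longrightarrow> seg_hi a N p - seg_lo a N p = a p"
  using cumsum_Suc[of a "p - 1"] by (simp add: seg_lo_def seg_hi_def)

lemma seg_bounds:
  assumes "\<forall>i\<in>{1..N}. 0 \<le> a i" "cumsum a N \<le> 1" "p \<le> N"
  shows "0 \<le> seg_lo a N p" "seg_lo a N p \<le> seg_hi a N p" "seg_hi a N p \<le> 1"
  using assms cumsum_nonneg[OF assms(1)] cumsum_mono[OF assms(1)]
  by (auto simp: seg_lo_def seg_hi_def intro: order_trans[of _ "cumsum a N"])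

lemma sum_seg_length:
  "\<forall>i\<in>{1..N}. 0 \<le> a i \<Longrightarrow> (\<Sum>p\<in>{0..N}. seg_hi a N p - seg_lo a N p) = 1"
  by (simp add: sum.atLeast_Suc_atMost seg_length cumsum_def)
     (simp add: seg_lo_def seg_hi_def cumsum_def)

lemma sum_overlap_segments:
  assumes "\<forall>i\<in>{1..N}. 0 \<le> a i" "cumsum a N \<le> 1"
  shows "(\<Sum>q\<in>{0..N}. overlap u1 u2 (t + seg_lo a N q) (t + seg_hi a N q)) = overlap u1 u2 t (t + 1)"
proof -
  have "(\<Sum>q=1..N. overlap u1 u2 (t + seg_lo a N q) (t + seg_hi a N q))
      = (\<Sum>q=1..N. overlap u1 u2 (t + cumsum a (q - 1)) (t + cumsum a q))"
    by (intro sum.cong) (auto simp: seg_lo_def seg_hi_def)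
  also have "\<dots> = overlap u1 u2 t (t + cumsum a N)"
    using sum_overlap_telescope[of N "\<lambda>k. t + cumsum a k"] assms(1) by (simp add: cumsum_Suc)
  finally have "(\<Sum>q=1..N. overlap u1 u2 (t + seg_lo a N q) (t + seg_hi a N q))
      = overlap u1 u2 t (t + cumsum a N)" .
  moreover have "0 \<le> cumsum a N"
    using cumsum_nonneg[OF assms(1)] by simp
  ultimately show ?thesis
    using assms(2) overlap_add[of t "t + cumsum a N" "t + 1" u1 u2]
    by (simp add: sum.atLeast_Suc_atMost seg_lo_def seg_hi_def)
qed

text \<open>Coupling of \<open>a\<close> and \<open>b\<close> by rotating the segments of \<open>b\<close> by \<open>s\<close> on the circle
  \<open>\<real>/\<int>\<close>; the second overlap is the part that wraps around.\<close>

definition shift_coupling :: "(nat \<Rightarrow> real) \<Rightarrow> (nat \<Rightarrow> real) \<Rightarrow> nat \<Rightarrow> real \<Rightarrow> nat \<Rightarrow> nat \<Rightarrow> real" where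
  "shift_coupling a b N s p q =
     overlap (seg_lo a N p) (seg_hi a N p) (s + seg_lo b N q) (s + seg_hi b N q)
   + overlap (seg_lo a N p) (seg_hi a N p) ((s - 1) + seg_lo b N q) ((s - 1) + seg_hi b N q)"

lemma shift_coupling_nonneg: "0 \<le> shift_coupling a b N s p q"
  by (simp add: shift_coupling_def overlap_nonneg)

lemma shift_coupling_row_sum:
  assumes a: "\<forall>i\<in>{1..N}. 0 \<le> a i" "cumsum a N \<le> 1"
    and b: "\<forall>i\<in>{1..N}. 0 \<le> b i" "cumsum b N \<le> 1"
    and "0 \<le> s" "s \<le> 1" "p \<le> N"
  shows "(\<Sum>q\<in>{0..N}. shift_coupling a b N s p q) = seg_hi a N p - seg_lo a N p"
proof -
  define u1 u2 where "u1 = seg_lo a N p" and "u2 = seg_hi a N p"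
  have "(\<Sum>q\<in>{0..N}. shift_coupling a b N s p q) = overlap u1 u2 s (s + 1) + overlap u1 u2 (s - 1) s"
    by (simp add: shift_coupling_def sum.distrib sum_overlap_segments[OF b] u1_def u2_def)
  also have "\<dots> = overlap u1 u2 (s - 1) (s + 1)"
    using overlap_add[of "s - 1" s "s + 1" u1 u2] by simp
  also have "\<dots> = u2 - u1"
    using seg_bounds[OF a \<open>p \<le> N\<close>] assms by (intro overlap_subinterval) (auto simp: u1_def u2_def)
  finally show ?thesis by (simp add: u1_def u2_def)
qed

lemma shift_coupling_column_sum:
  assumes a: "\<forall>i\<in>{1..N}. 0 \<le> a i" "cumsum a N \<le> 1"
    and b: "\<forall>i\<in>{1..N}. 0 \<le> b i" "cumsum b N \<le> 1"
    and "0 \<le> s" "s \<le> 1" "q \<le> N"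
  shows "(\<Sum>p\<in>{0..N}. shift_coupling a b N s p q) = seg_hi b N q - seg_lo b N q"
proof -
  define v1 v2 where "v1 = s + seg_lo b N q" and "v2 = s + seg_hi b N q"
  have "(\<Sum>p\<in>{0..N}. overlap (seg_lo a N p) (seg_hi a N p) v1 v2)
      = (\<Sum>p\<in>{0..N}. overlap v1 v2 (0 + seg_lo a N p) (0 + seg_hi a N p))"
    by (simp add: overlap_commute)
  moreover have "(\<Sum>p\<in>{0..N}. overlap (seg_lo a N p) (seg_hi a N p) (v1 - 1) (v2 - 1))
      = (\<Sum>p\<in>{0..N}. overlap v1 v2 (1 + seg_lo a N p) (1 + seg_hi a N p))"
    by (intro sum.cong) (auto simp: overlap_def max_def min_def)
  ultimately have "(\<Sum>p\<in>{0..N}. shift_coupling a b N s p q) = overlap v1 v2 0 1 + overlap v1 v2 1 2"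
    using sum_overlap_segments[OF a, of v1 v2 0] sum_overlap_segments[OF a, of v1 v2 1]
    by (simp add: shift_coupling_def sum.distrib v1_def v2_def algebra_simps)
  also have "\<dots> = overlap v1 v2 0 2"
    using overlap_add[of 0 1 2 v1 v2] by simp
  also have "\<dots> = v2 - v1"
    using seg_bounds[OF b \<open>q \<le> N\<close>] assms by (intro overlap_subinterval) (auto simp: v1_def v2_def)
  finally show ?thesis by (simp add: v1_def v2_def)
qed

lemma shift_coupling_diagonal:
  assumes "1 \<le> p" "cumsum a p - cumsum b (p - 1) \<le> s" "s \<le> 1 + cumsum a (p - 1) - cumsum b p"
  shows "shift_coupling a b N s p p = 0"
  using assms by (simp add: shift_coupling_def seg_lo_def seg_hi_def overlap_def max_def min_def)

text \<open>Since \<open>0 - 1 = 0\<close> in \<open>nat\<close>, the bounds for \<open>p = 0\<close> read \<open>0 \<le> s \<le> 1\<close>. Every lower bound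
  lies below every upper bound (for equal indices this is \<open>a p + b p \<le> 1\<close>), so the largest lower
  bound is a valid shift.\<close>

lemma exists_diagonal_free_shift:
  assumes a: "\<forall>i\<in>{1..N}. 0 \<le> a i" "cumsum a N \<le> 1"
    and b: "\<forall>i\<in>{1..N}. 0 \<le> b i" "cumsum b N \<le> 1"
    and ab: "\<forall>p\<in>{1..N}. a p + b p \<le> 1"
  shows "\<exists>s. \<forall>p\<in>{0..N}. cumsum a p - cumsum b (p - 1) \<le> s \<and> s \<le> 1 + cumsum a (p - 1) - cumsum b p"
proof -
  define lower where "lower p = cumsum a p - cumsum b (p - 1)" for p
  define upper where "upper p = 1 + cumsum a (p - 1) - cumsum b p" for p
  have cum_le_1: "cumsum a k \<le> 1" "cumsum b k \<le> 1" if "k \<le> N" for k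
    using that a b cumsum_mono[OF a(1), of k N] cumsum_mono[OF b(1), of k N] by auto
  have lower_le_upper: "lower p' \<le> upper p" if "p \<in> {0..N}" "p' \<in> {0..N}" for p p'
  proof (cases p' p rule: linorder_cases)
    case less
    then have "cumsum a p' \<le> cumsum a (p - 1)" "0 \<le> cumsum b (p' - 1)"
      using that cumsum_mono[OF a(1), of p' "p - 1"] cumsum_nonneg[OF b(1), of "p' - 1"] by auto
    then show ?thesis
      using that cum_le_1(2)[of p] by (simp add: lower_def upper_def)
  next
    case equal
    show ?thesis
    proof (cases "p = 0")
      case False
      then have "a p + b p \<le> 1"
        using that ab by simp
      then show ?thesis
        using equal False cumsum_Suc[of a "p - 1"] cumsum_Suc[of b "p - 1"]
        by (simp add: lower_def upper_def)
    qed (simp add: equal lower_def upper_def)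
  next
    case greater
    then have "cumsum b p \<le> cumsum b (p' - 1)" "0 \<le> cumsum a (p - 1)"
      using that cumsum_mono[OF b(1), of p "p' - 1"] cumsum_nonneg[OF a(1), of "p - 1"] by auto
    then show ?thesis
      using that cum_le_1(1)[of p'] by (simp add: lower_def upper_def)
  qed
  have "Max (lower ` {0..N}) \<in> lower ` {0..N}"
    by (intro Max_in) auto
  then obtain p0 where "p0 \<in> {0..N}" "lower p0 = Max (lower ` {0..N})"
    by (metis imageE)
  then have "\<forall>p\<in>{0..N}. lower p \<le> lower p0 \<and> lower p0 \<le> upper p"
    using lower_le_upper by simp
  then show ?thesis
    unfolding lower_def upper_def by blast
qed

text \<open>Index 0 stands for ``no link'': its row and column carry the slack of \<open>a\<close> and \<open>b\<close>.\<close>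

lemma exists_coupling:
  fixes a b :: "nat \<Rightarrow> real"
  assumes a: "\<forall>p\<in>{1..N}. 0 \<le> a p" "sum a {1..N} \<le> 1"
    and b: "\<forall>p\<in>{1..N}. 0 \<le> b p" "sum b {1..N} \<le> 1"
    and ab: "avoid_diagonal \<Longrightarrow> \<forall>p\<in>{1..N}. a p + b p \<le> 1"
  shows "\<exists>w. (\<forall>p q. 0 \<le> w p q) \<and> (\<Sum>p\<in>{0..N}. \<Sum>q\<in>{0..N}. w p q) = 1 \<and>
             (\<forall>p\<in>{1..N}. (\<Sum>q\<in>{0..N}. w p q) = a p) \<and> (\<forall>q\<in>{1..N}. (\<Sum>p\<in>{0..N}. w p q) = b q) \<and>
             (avoid_diagonal \<longrightarrow> (\<forall>p\<in>{1..N}. w p p = 0))"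
proof -
  have a': "cumsum a N \<le> 1" and b': "cumsum b N \<le> 1"
    using a b by (simp_all add: cumsum_def)
  obtain s where s: "0 \<le> s" "s \<le> 1"
    and diag: "avoid_diagonal \<Longrightarrow>
      \<forall>p\<in>{0..N}. cumsum a p - cumsum b (p - 1) \<le> s \<and> s \<le> 1 + cumsum a (p - 1) - cumsum b p"
  proof (cases avoid_diagonal)
    case True
    then obtain s where "\<forall>p\<in>{0..N}. cumsum a p - cumsum b (p - 1) \<le> s \<and> s \<le> 1 + cumsum a (p - 1) - cumsum b p"
      using exists_diagonal_free_shift[OF a(1) a' b(1) b'] ab by blast
    moreover from this have "0 \<le> s" "s \<le> 1"
      by (auto dest: bspec[of _ _ 0])
    ultimately show ?thesis
      using that by blast
  next
    case False
    then show ?thesis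
      using that[of 0] by simp
  qed
  let ?w = "shift_coupling a b N s"
  have "(\<Sum>p\<in>{0..N}. \<Sum>q\<in>{0..N}. ?w p q) = 1"
    using shift_coupling_row_sum[OF a(1) a' b(1) b' s] sum_seg_length[OF a(1)] by simp
  moreover have "\<forall>p\<in>{1..N}. (\<Sum>q\<in>{0..N}. ?w p q) = a p"
    using shift_coupling_row_sum[OF a(1) a' b(1) b' s] by (simp add: seg_length)
  moreover have "\<forall>q\<in>{1..N}. (\<Sum>p\<in>{0..N}. ?w p q) = b q"
    using shift_coupling_column_sum[OF a(1) a' b(1) b' s] by (simp add: seg_length)
  moreover have "avoid_diagonal \<longrightarrow> (\<forall>p\<in>{1..N}. ?w p p = 0)"
    using diag by (auto intro: shift_coupling_diagonal)
  ultimately show ?thesis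
    using shift_coupling_nonneg by blast
qed

section \<open>Link activation probabilities and cuts\<close>

lemma finite_states: "finite (states N m)"
proof -
  let ?F = "{f :: nat \<Rightarrow> nat set. \<forall>i. (i \<in> {0..N+1} \<longrightarrow> f i \<in> Pow {0..N+1}) \<and> (i \<notin> {0..N+1} \<longrightarrow> f i = {})}"
  have "finite ?F"
    by (rule finite_set_of_finite_funs) auto
  moreover have "states N m \<subseteq> ?F \<times> ?F"
    unfolding states_def by fastforce
  ultimately show ?thesis
    by (meson finite_SigmaI finite_subset)
qed

lemma states_link_sets:
  assumes "s \<in> states N m" "i \<le> N + 1"
  shows "finite (fst s i)" "card (fst s i) \<le> 1" "finite (snd s i)" "card (snd s i) \<le> 1"
proof -
  have "fst s i \<subseteq> {1..N+1}" "snd s i \<subseteq> {0..N}" "card (fst s i) \<le> 1" "card (snd s i) \<le> 1"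
    using assms by (auto simp: states_def split: prod.splits)
  then show "finite (fst s i)" "card (fst s i) \<le> 1" "finite (snd s i)" "card (snd s i) \<le> 1"
    using finite_subset by auto
qed

lemma states_fst_unique:
  "s \<in> states N m \<Longrightarrow> i \<le> N + 1 \<Longrightarrow> j \<in> fst s i \<Longrightarrow> j' \<in> fst s i \<Longrightarrow> j = j'"
  using states_link_sets[of s N m i] card_le_Suc0_iff_eq by auto

lemma states_snd_unique:
  "s \<in> states N m \<Longrightarrow> i \<le> N + 1 \<Longrightarrow> j \<in> snd s i \<Longrightarrow> j' \<in> snd s i \<Longrightarrow> j = j'"
  using states_link_sets[of s N m i] card_le_Suc0_iff_eq by auto

lemma states_HD_not_relay_both:
  assumes "s \<in> states N HD" "p \<in> {1..N}" "active s 0 p" "active s p (N + 1)"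
  shows False
proof -
  have "finite (fst s p)" "finite (snd s p)"
    using assms(1,2) states_link_sets by auto
  with assms(3,4) have "0 < card (fst s p)" "0 < card (snd s p)"
    by (auto simp: active_def card_gt_0_iff)
  moreover have "card (fst s p) + card (snd s p) \<le> 1"
    using assms(1,2) by (auto simp: states_def)
  ultimately show False
    by linarith
qed

lemma sum_prob_exclusive_events_le_1:
  fixes lam :: "'s \<Rightarrow> real"
  assumes "finite S" "finite P" "\<forall>s\<in>S. 0 \<le> lam s" "sum lam S = 1"
    and exclusive: "\<And>s p p'. s \<in> S \<Longrightarrow> p \<in> P \<Longrightarrow> p' \<in> P \<Longrightarrow> E p s \<Longrightarrow> E p' s \<Longrightarrow> p = p'"
  shows "(\<Sum>p\<in>P. \<Sum>s\<in>{s\<in>S. E p s}. lam s) \<le> 1"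
proof -
  have "(\<Sum>p\<in>P. \<Sum>s\<in>{s\<in>S. E p s}. lam s) = (\<Sum>p\<in>P. \<Sum>s\<in>S. lam s * of_bool (E p s))"
    unfolding sum.inter_filter[OF assms(1)] by (intro sum.cong) auto
  also have "\<dots> = (\<Sum>s\<in>S. lam s * (\<Sum>p\<in>P. of_bool (E p s)))"
    by (simp add: sum_distrib_left) (rule sum.swap)
  also have "\<dots> \<le> (\<Sum>s\<in>S. lam s * 1)"
  proof (intro sum_mono mult_left_mono)
    fix s assume "s \<in> S"
    then have "card (P \<inter> {p. E p s}) \<le> Suc 0"
      using assms(2) exclusive by (subst card_le_Suc0_iff_eq) auto
    then show "(\<Sum>p\<in>P. of_bool (E p s)) \<le> (1::real)"
      using assms(2) by simp
  qed (use assms(3) in auto)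
  finally show ?thesis
    using assms(4) by simp
qed

definition link_prob :: "nat \<Rightarrow> mode \<Rightarrow> (state \<Rightarrow> real) \<Rightarrow> nat \<Rightarrow> nat \<Rightarrow> real" where
  "link_prob N m lam i j = (\<Sum>s\<in>{s\<in>states N m. active s i j}. lam s)"

lemma link_prob_nonneg: "prob_vec N m lam \<Longrightarrow> 0 \<le> link_prob N m lam i j"
  unfolding link_prob_def prob_vec_def by (intro sum_nonneg) auto

lemma sum_link_prob_source_le_1: "prob_vec N m lam \<Longrightarrow> (\<Sum>p=1..N. link_prob N m lam 0 p) \<le> 1"
  unfolding link_prob_def prob_vec_def
  by (rule sum_prob_exclusive_events_le_1) (auto simp: finite_states active_def dest: states_fst_unique)

lemma sum_link_prob_destination_le_1: "prob_vec N m lam \<Longrightarrow> (\<Sum>p=1..N. link_prob N m lam p (N + 1)) \<le> 1"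
  unfolding link_prob_def prob_vec_def
  by (rule sum_prob_exclusive_events_le_1) (auto simp: finite_states active_def dest: states_snd_unique)

lemma link_prob_HD_relay_le_1:
  assumes "prob_vec N HD lam" "p \<in> {1..N}"
  shows "link_prob N HD lam 0 p + link_prob N HD lam p (N + 1) \<le> 1"
proof -
  have "\<not> (active s 0 p \<and> active s p (N + 1))" if "s \<in> states N HD" for s
    using states_HD_not_relay_both that assms(2) by blast
  then have "(\<Sum>(i, j)\<in>{(0, p), (p, N + 1)}. link_prob N HD lam i j) \<le> 1"
    using assms(1) unfolding link_prob_def prob_vec_def case_prod_beta
    by (intro sum_prob_exclusive_events_le_1) (auto simp: finite_states)
  then show ?thesis
    using assms(2) by simp
qed

text \<open>Only the source links into \<open>-\<Omega>\<close> and the destination links out of \<open>\<Omega>\<close> cross the cut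
  with positive capacity.\<close>

lemma cut_value_diamond:
  assumes "0 \<in> \<Omega>" "\<Omega> \<subseteq> {0..N}"
  shows "cut_value N m lsrc ldst lam \<Omega> =
    (\<Sum>p=1..N. if p \<in> \<Omega> then link_prob N m lam p (N + 1) * ldst p else link_prob N m lam 0 p * lsrc p)"
proof -
  let ?T = "link_prob N m lam"
  have source: "(\<Sum>j\<in>{0..N+1} - \<Omega>. ?T 0 j * ell N lsrc ldst j 0)
      = (\<Sum>p=1..N. if p \<in> \<Omega> then 0 else ?T 0 p * lsrc p)"
  proof -
    have "(\<Sum>j\<in>{0..N+1} - \<Omega>. ?T 0 j * ell N lsrc ldst j 0) = (\<Sum>p\<in>{1..N} - \<Omega>. ?T 0 p * lsrc p)"
      by (rule sum.mono_neutral_cong_right) (auto simp: ell_def)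
    also have "\<dots> = (\<Sum>p=1..N. if p \<in> \<Omega> then 0 else ?T 0 p * lsrc p)"
      by (rule sum.mono_neutral_cong_left) auto
    finally show ?thesis .
  qed
  have relay: "(\<Sum>j\<in>{0..N+1} - \<Omega>. ?T i j * ell N lsrc ldst j i) = ?T i (N + 1) * ldst i"
    if "i \<in> \<Omega> - {0}" for i
  proof -
    have "(\<Sum>j\<in>{0..N+1} - \<Omega>. ?T i j * ell N lsrc ldst j i)
        = (\<Sum>j\<in>{0..N+1} - \<Omega>. if j = N + 1 then ?T i (N + 1) * ldst i else 0)"
      using that assms by (intro sum.cong) (auto simp: ell_def)
    then show ?thesis
      using assms by auto
  qed
  have "cut_value N m lsrc ldst lam \<Omega>
      = (\<Sum>j\<in>{0..N+1} - \<Omega>. ?T 0 j * ell N lsrc ldst j 0)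
        + (\<Sum>i\<in>\<Omega> - {0}. \<Sum>j\<in>{0..N+1} - \<Omega>. ?T i j * ell N lsrc ldst j i)"
    using assms finite_subset[OF assms(2)] by (simp add: cut_value_def link_prob_def sum.remove)
  also have "(\<Sum>i\<in>\<Omega> - {0}. \<Sum>j\<in>{0..N+1} - \<Omega>. ?T i j * ell N lsrc ldst j i)
      = (\<Sum>p=1..N. if p \<in> \<Omega> then ?T p (N + 1) * ldst p else 0)"
    using assms relay by (intro sum.mono_neutral_cong_left) auto
  finally show ?thesis
    using source by (simp add: sum.distrib[symmetric] if_distrib cong: if_cong)
qed

lemma finite_cuts: "finite {\<Omega>. 0 \<in> \<Omega> \<and> \<Omega> \<subseteq> {0..N::nat}}"
  by (rule finite_subset[of _ "Pow {0..N}"]) auto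

definition cutset_bound :: "nat \<Rightarrow> mode \<Rightarrow> (nat \<Rightarrow> real) \<Rightarrow> (nat \<Rightarrow> real) \<Rightarrow> (state \<Rightarrow> real) \<Rightarrow> real" where
  "cutset_bound N m lsrc ldst lam =
     Min ((\<lambda>\<Omega>. cut_value N m lsrc ldst lam \<Omega>) ` {\<Omega>. 0 \<in> \<Omega> \<and> \<Omega> \<subseteq> {0..N}})"

lemma cutset_bound_diamond:
  "cutset_bound N m lsrc ldst lam =
   (\<Sum>p=1..N. min (link_prob N m lam 0 p * lsrc p) (link_prob N m lam p (N + 1) * ldst p))"
  unfolding cutset_bound_def
proof (rule Min_eqI)
  show "finite ((\<lambda>\<Omega>. cut_value N m lsrc ldst lam \<Omega>) ` {\<Omega>. 0 \<in> \<Omega> \<and> \<Omega> \<subseteq> {0..N}})"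
    using finite_cuts by simp
next
  fix y
  assume "y \<in> (\<lambda>\<Omega>. cut_value N m lsrc ldst lam \<Omega>) ` {\<Omega>. 0 \<in> \<Omega> \<and> \<Omega> \<subseteq> {0..N}}"
  then obtain \<Omega> where "0 \<in> \<Omega>" "\<Omega> \<subseteq> {0..N}" "y = cut_value N m lsrc ldst lam \<Omega>"
    by blast
  then show "(\<Sum>p=1..N. min (link_prob N m lam 0 p * lsrc p) (link_prob N m lam p (N + 1) * ldst p)) \<le> y"
    by (simp add: cut_value_diamond sum_mono)
next
  define \<Omega> where "\<Omega> = insert 0 {p\<in>{1..N}. link_prob N m lam p (N + 1) * ldst p \<le> link_prob N m lam 0 p * lsrc p}"
  have "0 \<in> \<Omega>" "\<Omega> \<subseteq> {0..N}"
    by (auto simp: \<Omega>_def)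
  moreover have "cut_value N m lsrc ldst lam \<Omega>
      = (\<Sum>p=1..N. min (link_prob N m lam 0 p * lsrc p) (link_prob N m lam p (N + 1) * ldst p))"
    using calculation by (simp add: cut_value_diamond) (intro sum.cong; auto simp: \<Omega>_def)
  ultimately show "(\<Sum>p=1..N. min (link_prob N m lam 0 p * lsrc p) (link_prob N m lam p (N + 1) * ldst p))
      \<in> (\<lambda>\<Omega>. cut_value N m lsrc ldst lam \<Omega>) ` {\<Omega>. 0 \<in> \<Omega> \<and> \<Omega> \<subseteq> {0..N}}"
    by (metis (mono_tags, lifting) image_eqI mem_Collect_eq)
qed

section \<open>Schedules with prescribed link activation probabilities\<close>

lemma link_prob_as_sum:
  "link_prob N m lam i j = (\<Sum>s\<in>states N m. lam s * of_bool (active s i j))"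
  unfolding link_prob_def sum.inter_filter[OF finite_states] by (intro sum.cong) auto

text \<open>The source transmits to relay \<open>p\<close> and relay \<open>q\<close> to the destination; the index 0 stands
  for a silent source resp. destination link.\<close>

definition relay_state :: "nat \<Rightarrow> nat \<Rightarrow> nat \<Rightarrow> state" where
  "relay_state N p q =
     ((\<lambda>i. if i = 0 \<and> p \<in> {1..N} then {p} else if i = q \<and> q \<in> {1..N} then {N + 1} else {}),
      (\<lambda>i. if i = N + 1 \<and> q \<in> {1..N} then {q} else if i = p \<and> p \<in> {1..N} then {0} else {}))"

lemma relay_state_in_states:
  "p \<le> N \<Longrightarrow> q \<le> N \<Longrightarrow> (m = HD \<Longrightarrow> p = q \<Longrightarrow> p = 0) \<Longrightarrow> relay_state N p q \<in> states N m"
  unfolding states_def relay_state_def by (cases m) (auto simp: card_insert_if)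

lemma active_relay_state_source:
  "j \<in> {1..N} \<Longrightarrow> p \<le> N \<Longrightarrow> active (relay_state N p q) 0 j \<longleftrightarrow> p = j"
  by (auto simp: active_def relay_state_def)

lemma active_relay_state_destination:
  "j \<in> {1..N} \<Longrightarrow> q \<le> N \<Longrightarrow> active (relay_state N p q) j (N + 1) \<longleftrightarrow> q = j"
  by (auto simp: active_def relay_state_def)

lemma sum_pushforward:
  fixes w :: "'d \<Rightarrow> real"
  assumes "finite S" "finite D" "\<And>d. d \<in> D \<Longrightarrow> w d \<noteq> 0 \<Longrightarrow> f d \<in> S"
  shows "(\<Sum>s\<in>S. (\<Sum>d\<in>{d\<in>D. f d = s}. w d) * g s) = (\<Sum>d\<in>D. w d * g (f d))"
proof -
  have "(\<Sum>s\<in>S. (\<Sum>d\<in>{d\<in>D. f d = s}. w d) * g s) = (\<Sum>s\<in>S. \<Sum>d\<in>D. if f d = s then w d * g (f d) else 0)"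
    unfolding sum.inter_filter[OF assms(2)] sum_distrib_right by (intro sum.cong) auto
  also have "\<dots> = (\<Sum>d\<in>D. \<Sum>s\<in>S. if f d = s then w d * g (f d) else 0)"
    by (rule sum.swap)
  also have "\<dots> = (\<Sum>d\<in>D. w d * g (f d))"
    using assms by (intro sum.cong) (auto simp: sum.delta')
  finally show ?thesis .
qed

lemma exists_schedule_with_link_probs:
  assumes a: "\<forall>p\<in>{1..N}. 0 \<le> a p" "sum a {1..N} \<le> 1"
    and b: "\<forall>p\<in>{1..N}. 0 \<le> b p" "sum b {1..N} \<le> 1"
    and ab: "m = HD \<Longrightarrow> \<forall>p\<in>{1..N}. a p + b p \<le> 1"
  shows "\<exists>lam. prob_vec N m lam \<and>
           (\<forall>p\<in>{1..N}. link_prob N m lam 0 p = a p \<and> link_prob N m lam p (N + 1) = b p)"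
proof -
  obtain w where w_nonneg: "\<forall>p q. 0 \<le> w p q" and w_total: "(\<Sum>p\<in>{0..N}. \<Sum>q\<in>{0..N}. w p q) = 1"
    and w_rows: "\<forall>p\<in>{1..N}. (\<Sum>q\<in>{0..N}. w p q) = a p"
    and w_columns: "\<forall>q\<in>{1..N}. (\<Sum>p\<in>{0..N}. w p q) = b q"
    and w_diagonal: "m = HD \<longrightarrow> (\<forall>p\<in>{1..N}. w p p = 0)"
    using exists_coupling[OF a b ab] by blast
  define lam where "lam s = (\<Sum>d\<in>{d\<in>{0..N} \<times> {0..N}. case_prod (relay_state N) d = s}. case_prod w d)" for s
  have lam_sum: "(\<Sum>s\<in>states N m. lam s * g s) = (\<Sum>p\<in>{0..N}. \<Sum>q\<in>{0..N}. w p q * g (relay_state N p q))"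
    for g
  proof -
    have "\<And>d. d \<in> {0..N} \<times> {0..N} \<Longrightarrow> case_prod w d \<noteq> 0 \<Longrightarrow> case_prod (relay_state N) d \<in> states N m"
      using w_diagonal by (auto intro!: relay_state_in_states)
    then show ?thesis
      unfolding lam_def by (simp add: sum_pushforward finite_states sum.cartesian_product split_beta)
  qed
  have "prob_vec N m lam"
    using lam_sum[of "\<lambda>_. 1"] w_total w_nonneg by (simp add: prob_vec_def lam_def sum_nonneg split_beta)
  moreover have "link_prob N m lam 0 p = a p" if "p \<in> {1..N}" for p
    using that w_rows by (simp add: link_prob_as_sum lam_sum active_relay_state_source if_distrib sum.If_cases)
  moreover have "link_prob N m lam p (N + 1) = b p" if "p \<in> {1..N}" for p
  proof -
    have "link_prob N m lam p (N + 1) = (\<Sum>p'\<in>{0..N}. \<Sum>q\<in>{0..N}. if q = p then w p' q else 0)"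
      unfolding link_prob_as_sum lam_sum using that
      by (intro sum.cong refl) (use active_relay_state_destination[of p N] in auto)
    then show ?thesis
      using that w_columns by simp
  qed
  ultimately show ?thesis
    by blast
qed

section \<open>The linear program\<close>

lemma Cp_pos: "0 < lsrc p \<Longrightarrow> 0 < ldst p \<Longrightarrow> 0 < Cp m lsrc ldst p"
  by (auto simp: Cp_def)

lemma min_le_Cp:
  assumes "0 < lsrc p" "0 < ldst p" "A \<le> 1" "B \<le> 1" "m = HD \<Longrightarrow> A + B \<le> 1"
  shows "min (A * lsrc p) (B * ldst p) \<le> Cp m lsrc ldst p"
proof (cases m)
  case FD
  have "A * lsrc p \<le> lsrc p" "B * ldst p \<le> ldst p"
    using assms by (simp_all add: mult_le_cancel_right1)
  then show ?thesis
    using FD by (simp add: Cp_def min_def)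
next
  case HD
  let ?t = "min (A * lsrc p) (B * ldst p)"
  have "?t * (lsrc p + ldst p) = ?t * ldst p + ?t * lsrc p"
    by (simp add: algebra_simps)
  also have "\<dots> \<le> A * lsrc p * ldst p + B * ldst p * lsrc p"
    using assms(1,2) by (intro add_mono mult_right_mono) auto
  also have "\<dots> = (A + B) * (lsrc p * ldst p)"
    by (simp add: algebra_simps)
  also have "\<dots> \<le> lsrc p * ldst p"
    using assms HD by (simp add: mult_le_cancel_right1)
  finally show ?thesis
    using HD assms(1,2) by (simp add: Cp_def pos_le_divide_eq)
qed

lemma Cp_HD_split:
  "0 < lsrc p \<Longrightarrow> 0 < ldst p \<Longrightarrow> Cp HD lsrc ldst p / lsrc p + Cp HD lsrc ldst p / ldst p = 1"
proof -
  assume "0 < lsrc p" "0 < ldst p"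
  then have "Cp HD lsrc ldst p / lsrc p = ldst p / (lsrc p + ldst p)"
    "Cp HD lsrc ldst p / ldst p = lsrc p / (lsrc p + ldst p)"
    by (simp_all add: Cp_def)
  with \<open>0 < lsrc p\<close> \<open>0 < ldst p\<close> show ?thesis
    by (simp add: add_divide_distrib[symmetric])
qed

lemma cutset_bound_le_P1d:
  assumes pos: "\<forall>p\<in>{1..N}. 0 < lsrc p \<and> 0 < ldst p" and lam: "prob_vec N m lam"
  shows "\<exists>x. P1d_feasible N m lsrc ldst x \<and> cutset_bound N m lsrc ldst lam \<le> (\<Sum>p=1..N. x p * Cp m lsrc ldst p)"
proof -
  define A where "A p = link_prob N m lam 0 p" for p
  define B where "B p = link_prob N m lam p (N + 1)" for p
  define t where "t p = min (A p * lsrc p) (B p * ldst p)" for p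
  define x where "x p = t p / Cp m lsrc ldst p" for p
  have A_nonneg: "0 \<le> A p" and B_nonneg: "0 \<le> B p" for p
    using link_prob_nonneg[OF lam] by (simp_all add: A_def B_def)
  have sum_A: "(\<Sum>p=1..N. A p) \<le> 1" and sum_B: "(\<Sum>p=1..N. B p) \<le> 1"
    using sum_link_prob_source_le_1[OF lam] sum_link_prob_destination_le_1[OF lam]
    by (simp_all add: A_def B_def)
  have "A p \<le> 1" "B p \<le> 1" if "p \<in> {1..N}" for p
    using that member_le_sum[of p "{1..N}" A] member_le_sum[of p "{1..N}" B] sum_A sum_B A_nonneg B_nonneg
    by force+
  then have t_le_Cp: "t p \<le> Cp m lsrc ldst p" if "p \<in> {1..N}" for p
    using that pos link_prob_HD_relay_le_1[of N lam p] lam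
    unfolding t_def A_def B_def by (intro min_le_Cp) (auto simp: A_def B_def)
  have xC: "x p * Cp m lsrc ldst p = t p" if "p \<in> {1..N}" for p
    using that pos Cp_pos[of lsrc p ldst m] by (simp add: x_def)
  have "P1d_feasible N m lsrc ldst x"
    unfolding P1d_feasible_def
  proof (intro conjI ballI)
    fix p assume p: "p \<in> {1..N}"
    then have "0 < lsrc p" "0 < ldst p"
      using pos by auto
    then have "0 \<le> t p" "0 < Cp m lsrc ldst p"
      using Cp_pos[of lsrc p ldst m] A_nonneg[of p] B_nonneg[of p] by (simp_all add: t_def)
    then show "0 \<le> x p" "x p \<le> 1"
      using t_le_Cp[OF p] by (simp_all add: x_def)
  next
    have "(\<Sum>p=1..N. x p * Cp m lsrc ldst p / lsrc p) \<le> (\<Sum>p=1..N. A p)"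
      using pos by (intro sum_mono) (simp add: xC t_def divide_le_eq)
    then show "(\<Sum>p=1..N. x p * Cp m lsrc ldst p / lsrc p) \<le> 1"
      using sum_A by linarith
  next
    have "(\<Sum>p=1..N. x p * Cp m lsrc ldst p / ldst p) \<le> (\<Sum>p=1..N. B p)"
      using pos by (intro sum_mono) (simp add: xC t_def divide_le_eq)
    then show "(\<Sum>p=1..N. x p * Cp m lsrc ldst p / ldst p) \<le> 1"
      using sum_B by linarith
  qed
  moreover have "cutset_bound N m lsrc ldst lam = (\<Sum>p=1..N. x p * Cp m lsrc ldst p)"
    by (simp add: cutset_bound_diamond xC t_def A_def B_def)
  ultimately show ?thesis
    by auto
qed

lemma P1d_le_cutset_bound:
  assumes pos: "\<forall>p\<in>{1..N}. 0 < lsrc p \<and> 0 < ldst p" and x: "P1d_feasible N m lsrc ldst x"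
  shows "\<exists>lam. prob_vec N m lam \<and> (\<Sum>p=1..N. x p * Cp m lsrc ldst p) \<le> cutset_bound N m lsrc ldst lam"
proof -
  define a where "a p = x p * Cp m lsrc ldst p / lsrc p" for p
  define b where "b p = x p * Cp m lsrc ldst p / ldst p" for p
  have "\<forall>p\<in>{1..N}. 0 \<le> a p" "\<forall>p\<in>{1..N}. 0 \<le> b p"
    using x pos Cp_pos[of lsrc _ ldst m] by (auto simp: a_def b_def P1d_feasible_def less_imp_le)
  moreover have "sum a {1..N} \<le> 1" "sum b {1..N} \<le> 1"
    using x by (simp_all add: a_def b_def P1d_feasible_def)
  moreover have "\<forall>p\<in>{1..N}. a p + b p \<le> 1" if "m = HD"
  proof
    fix p assume "p \<in> {1..N}"
    then have "a p + b p = x p"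
      using that pos Cp_HD_split[of lsrc p ldst] by (simp add: a_def b_def flip: distrib_left times_divide_eq_right)
    then show "a p + b p \<le> 1"
      using x \<open>p \<in> {1..N}\<close> by (simp add: P1d_feasible_def)
  qed
  ultimately obtain lam where lam: "prob_vec N m lam"
    and marginals: "\<forall>p\<in>{1..N}. link_prob N m lam 0 p = a p \<and> link_prob N m lam p (N + 1) = b p"
    using exists_schedule_with_link_probs[of N a b m] by blast
  have "cutset_bound N m lsrc ldst lam = (\<Sum>p=1..N. x p * Cp m lsrc ldst p)"
    unfolding cutset_bound_diamond
  proof (intro sum.cong refl)
    fix p assume "p \<in> {1..N}"
    moreover from this have "0 < lsrc p" "0 < ldst p"
      using pos by auto
    ultimately show "min (link_prob N m lam 0 p * lsrc p) (link_prob N m lam p (N + 1) * ldst p)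
        = x p * Cp m lsrc ldst p"
      using marginals by (simp add: a_def b_def)
  qed
  then show ?thesis
    using lam by auto
qed

theorem lemma4:
  fixes N :: nat and m :: mode and lsrc ldst :: "nat \<Rightarrow> real"
  assumes "\<forall>p\<in>{1..N}. lsrc p \<in> \<rat> \<and> lsrc p > 0"
      and "\<forall>p\<in>{1..N}. ldst p \<in> \<rat> \<and> ldst p > 0"
  shows "C_cs_iid N m lsrc ldst = P1d_opt N m lsrc ldst"
proof -
  have pos: "\<forall>p\<in>{1..N}. 0 < lsrc p \<and> 0 < ldst p"
    using assms by auto
  let ?objective = "\<lambda>x. \<Sum>p=1..N. x p * Cp m lsrc ldst p"
  have bdd_objective: "bdd_above (?objective ` {x. P1d_feasible N m lsrc ldst x})"
  proof (rule bdd_aboveI2)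
    fix x assume "x \<in> {x. P1d_feasible N m lsrc ldst x}"
    then show "?objective x \<le> (\<Sum>p=1..N. Cp m lsrc ldst p)"
      using pos Cp_pos[of lsrc _ ldst m]
      by (intro sum_mono) (auto simp: P1d_feasible_def mult_left_le_one_le)
  qed
  have bdd_cutset: "bdd_above (cutset_bound N m lsrc ldst ` {lam. prob_vec N m lam})"
    using bdd_objective cutset_bound_le_P1d[OF pos]
    by (auto simp: bdd_above_def) (meson order_trans)
  have "(\<lambda>_. 0) \<in> {x. P1d_feasible N m lsrc ldst x}"
    by (simp add: P1d_feasible_def)
  then obtain lam0 where "prob_vec N m lam0"
    using P1d_le_cutset_bound[OF pos] by blast
  show ?thesis
    unfolding C_cs_iid_def P1d_opt_def cutset_bound_def[symmetric]
  proof (rule antisym)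
    show "Sup (cutset_bound N m lsrc ldst ` {lam. prob_vec N m lam}) \<le> Sup (?objective ` {x. P1d_feasible N m lsrc ldst x})"
      using \<open>prob_vec N m lam0\<close> cutset_bound_le_P1d[OF pos] by (intro cSUP_mono bdd_objective) auto
    show "Sup (?objective ` {x. P1d_feasible N m lsrc ldst x}) \<le> Sup (cutset_bound N m lsrc ldst ` {lam. prob_vec N m lam})"
      using \<open>(\<lambda>_. 0) \<in> _\<close> P1d_le_cutset_bound[OF pos] by (intro cSUP_mono bdd_cutset) auto
  qed
qed

end
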